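(* Let $M=\{u=F(z,\bar z)\}\subset\mathbb{C}^2$ be a rigid real-analytic hypersurface passing through the origin with $F_{z\bar z}$ nowhere vanishing near $0$. Then $M$ is (locally near the origin) rigidly biholomorphically equivalent to the Heisenberg sphere $\{u'=z'\bar z'\}$ if and only if $$0\equiv \mathbf{R}(F)=\frac{F_{zz\bar z\bar z}F_{z\bar z}-F_{zz\bar z}F_{z\bar z\bar z}}{(F_{z\bar z})^2},\quad\text{i.e.}\quad F_{zz\bar z\bar z}F_{z\bar z}-F_{zz\bar z}F_{z\bar z\bar z}\equiv0 .$$
   Context: Coordinates on $\mathbb{C}^2$ are $(z,w)$, $w=u+iv$. A rigid hypersurface is one graphed as $u=F(z,\bar z)$ with $F$ real-valued real-analytic. A rigid biholomorphism is a local biholomorphism of the form $(z,w)\mapsto(f(z),aw+g(z))$ with $f,g$ holomorphic and $a\in\mathbb{R}\setminus\{0\}$. *)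

theory Defs
  imports "HOL-Analysis.Analysis"
begin

definition pdx :: "(complex \<Rightarrow> complex) \<Rightarrow> complex \<Rightarrow> complex" where
  "pdx f z = vector_derivative (\<lambda>t::real. f (z + of_real t)) (at 0)"

definition pdy :: "(complex \<Rightarrow> complex) \<Rightarrow> complex \<Rightarrow> complex" where
  "pdy f z = vector_derivative (\<lambda>t::real. f (z + \<i> * of_real t)) (at 0)"

definition dz :: "(complex \<Rightarrow> complex) \<Rightarrow> complex \<Rightarrow> complex" where
  "dz f z = (pdx f z - \<i> * pdy f z) / 2"

definition dzb :: "(complex \<Rightarrow> complex) \<Rightarrow> complex \<Rightarrow> complex" where
  "dzb f z = (pdx f z + \<i> * pdy f z) / 2"

definition real_analytic_near0 :: "(complex \<Rightarrow> real) \<Rightarrow> bool" where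
  "real_analytic_near0 F \<longleftrightarrow> (\<exists>r>0. \<exists>c :: nat \<Rightarrow> nat \<Rightarrow> complex.
      \<forall>z\<in>ball 0 r. ((\<lambda>(j,k). c j k * z ^ j * cnj z ^ k) has_sum complex_of_real (F z)) UNIV)"

definition rigid_hyp :: "(complex \<Rightarrow> real) \<Rightarrow> (complex \<times> complex) set" where
  "rigid_hyp F = {(z, w). Re w = F z}"

definition heisenberg :: "(complex \<times> complex) set" where
  "heisenberg = {(z, w). Re w = (cmod z)\<^sup>2}"

definition rigid_map :: "(complex \<Rightarrow> complex) \<Rightarrow> real \<Rightarrow> (complex \<Rightarrow> complex)
    \<Rightarrow> complex \<times> complex \<Rightarrow> complex \<times> complex" where
  "rigid_map f a g = (\<lambda>(z, w). (f z, complex_of_real a * w + g z))"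

text \<open>Local rigid biholomorphic equivalence of the germ of \<open>M\<close> at 0 with the sphere:
  a rigid map, biholomorphic on \<open>U \<times> \<complex>\<close> (\<open>f\<close> injective holomorphic on an open \<open>U \<ni> 0\<close>,
  \<open>a \<noteq> 0\<close>), sending \<open>M \<inter> (U \<times> \<complex>)\<close> into the Heisenberg sphere.\<close>
definition rigidly_equiv_sphere_at0 :: "(complex \<Rightarrow> real) \<Rightarrow> bool" where
  "rigidly_equiv_sphere_at0 F \<longleftrightarrow> (\<exists>U f g a. open U \<and> 0 \<in> U \<and> f holomorphic_on U \<and>
      inj_on f U \<and> g holomorphic_on U \<and> a \<noteq> 0 \<and>
      rigid_map f a g ` (rigid_hyp F \<inter> (U \<times> UNIV)) \<subseteq> heisenberg)"

end

(* If a F + Re g = |f|^2 for a rigid map (f, a w + g), then F = (|f|^2 - Re g) / a, and each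
   iterated Wirtinger derivative of F has the shape A p conj(q) + s + conj(t) with p, q, s, t
   holomorphic; F_{z zbar} = |f'|^2 / a, and the numerator of R(F) vanishes identically.
   Conversely, with h = F_{z zbar} real and nonvanishing, R(F) = 0 says that log h is harmonic:
   h_z / h is holomorphic, whence h = kappa |f'|^2 with kappa real and f' nonvanishing.  Then
   F - kappa |f|^2 is a real function with holomorphic z-derivative, i.e. c + 2 Re Phi, and
   (z, w) |-> (f z, (w - 2 Phi z - c) / kappa) maps M into the sphere.
   Real-analyticity enters only through a normally convergent double power series in z and zbar,
   which makes all iterated Wirtinger derivatives exist, be real-differentiable, and commute;
   without it dz and dzb, being defined through vector_derivative, could return junk values. *)

theory Submission
  imports Defs "HOL-Complex_Analysis.Complex_Analysis"
begin

section \<open>Wirtinger derivatives\<close>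

lemma line_derivative_cong_open:
  fixes c z :: complex and u v :: "complex \<Rightarrow> 'a::real_normed_vector"
  assumes "open S" "z \<in> S" "\<And>x. x \<in> S \<Longrightarrow> u x = v x"
  shows "vector_derivative (\<lambda>t::real. u (z + c * of_real t)) (at 0)
    = vector_derivative (\<lambda>t. v (z + c * of_real t)) (at 0)"
proof -
  have "((\<lambda>t::real. z + c * of_real t) \<longlongrightarrow> z) (nhds 0)"
    by (auto intro!: tendsto_eq_intros filterlim_ident)
  then have "eventually (\<lambda>t. z + c * of_real t \<in> S) (nhds 0)"
    using assms(1,2) by (rule topological_tendstoD)
  then have "eventually (\<lambda>t. t \<in> UNIV \<longrightarrow> u (z + c * of_real t) = v (z + c * of_real t)) (nhds 0)"
    by eventually_elim (use assms(3) in auto)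
  then show ?thesis
    by (rule vector_derivative_cong_eq) auto
qed

lemma dz_cong_open:
  assumes "open S" "z \<in> S" "\<And>x. x \<in> S \<Longrightarrow> u x = v x"
  shows "dz u z = dz v z"
proof -
  have "pdx u z = pdx v z" "pdy u z = pdy v z"
    using line_derivative_cong_open[of S z u v 1] line_derivative_cong_open[of S z u v \<i>] assms
    by (simp_all add: pdx_def pdy_def)
  then show ?thesis
    by (simp add: dz_def)
qed

definition has_wirtinger_derivs :: "(complex \<Rightarrow> complex) \<Rightarrow> complex \<Rightarrow> complex \<Rightarrow> complex \<Rightarrow> bool" where
  "has_wirtinger_derivs u a b z \<longleftrightarrow> (u has_derivative (\<lambda>h. a * h + b * cnj h)) (at z)"

lemma has_wirtinger_derivsD:
  assumes "has_wirtinger_derivs u a b z"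
  shows "dz u z = a" "dzb u z = b"
proof -
  have u: "(u has_derivative (\<lambda>h. a * h + b * cnj h)) (at (z + of_real 0))"
    and u': "(u has_derivative (\<lambda>h. a * h + b * cnj h)) (at (z + \<i> * of_real 0))"
    using assms by (simp_all add: has_wirtinger_derivs_def)
  have "((\<lambda>t::real. z + of_real t) has_derivative (\<lambda>t. of_real t)) (at 0)"
    by (auto intro!: derivative_eq_intros)
  from has_derivative_compose[OF this u]
  have "((\<lambda>t. u (z + of_real t)) has_vector_derivative (a + b)) (at 0)"
    unfolding has_vector_derivative_def
    by (rule has_derivative_eq_rhs) (auto simp: scaleR_conv_of_real algebra_simps)
  then have px: "pdx u z = a + b"
    unfolding pdx_def by (rule vector_derivative_at)
  have "((\<lambda>t::real. z + \<i> * of_real t) has_derivative (\<lambda>t. \<i> * of_real t)) (at 0)"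
    by (auto intro!: derivative_eq_intros)
  from has_derivative_compose[OF this u']
  have "((\<lambda>t. u (z + \<i> * of_real t)) has_vector_derivative (\<i> * a - \<i> * b)) (at 0)"
    unfolding has_vector_derivative_def
    by (rule has_derivative_eq_rhs) (auto simp: scaleR_conv_of_real algebra_simps)
  then have py: "pdy u z = \<i> * a - \<i> * b"
    unfolding pdy_def by (rule vector_derivative_at)
  show "dz u z = a" "dzb u z = b"
    unfolding dz_def dzb_def px py by (simp_all add: algebra_simps)
qed

lemma has_wirtinger_derivs_eq_rhs:
  "has_wirtinger_derivs u a b z \<Longrightarrow> a = a' \<Longrightarrow> b = b' \<Longrightarrow> has_wirtinger_derivs u a' b' z"
  by simp

lemma has_wirtinger_derivs_holomorphic:
  "(f has_field_derivative d) (at z) \<Longrightarrow> has_wirtinger_derivs f d 0 z"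
  unfolding has_wirtinger_derivs_def has_field_derivative_def
  by (erule has_derivative_eq_rhs) (simp add: fun_eq_iff)

lemma has_wirtinger_derivs_holomorphic_on:
  "f holomorphic_on S \<Longrightarrow> open S \<Longrightarrow> x \<in> S \<Longrightarrow> has_wirtinger_derivs f (deriv f x) 0 x"
  by (intro has_wirtinger_derivs_holomorphic holomorphic_derivI)

lemma has_wirtinger_derivs_holomorphic_mult_cnj:
  assumes "p holomorphic_on S" "q holomorphic_on S" "open S" "x \<in> S"
  shows "has_wirtinger_derivs (\<lambda>x. p x * cnj (q x)) (deriv p x * cnj (q x)) (p x * cnj (deriv q x)) x"
  using has_derivative_mult[OF has_wirtinger_derivs_holomorphic_on[OF assms(1,3,4), unfolded has_wirtinger_derivs_def]
      has_derivative_cnj[OF has_wirtinger_derivs_holomorphic_on[OF assms(2,3,4), unfolded has_wirtinger_derivs_def]]]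
  unfolding has_wirtinger_derivs_def by (rule has_derivative_eq_rhs) (simp add: fun_eq_iff algebra_simps)

lemma has_wirtinger_derivs_imp_field_derivative:
  "has_wirtinger_derivs u a 0 z \<Longrightarrow> (u has_field_derivative a) (at z)"
  unfolding has_wirtinger_derivs_def has_field_derivative_def
  by (erule has_derivative_eq_rhs) (simp add: fun_eq_iff)

lemma has_wirtinger_derivs_const: "has_wirtinger_derivs (\<lambda>x. k) 0 0 z"
  unfolding has_wirtinger_derivs_def by simp

lemma has_wirtinger_derivs_diff:
  "has_wirtinger_derivs u a b z \<Longrightarrow> has_wirtinger_derivs v c d z \<Longrightarrow>
    has_wirtinger_derivs (\<lambda>x. u x - v x) (a - c) (b - d) z"
  unfolding has_wirtinger_derivs_def
  by (rule has_derivative_eq_rhs, (rule has_derivative_diff; assumption)) (auto simp: algebra_simps)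

lemma has_wirtinger_derivs_mult:
  "has_wirtinger_derivs u a b z \<Longrightarrow> has_wirtinger_derivs v c d z \<Longrightarrow>
    has_wirtinger_derivs (\<lambda>x. u x * v x) (a * v z + u z * c) (b * v z + u z * d) z"
  unfolding has_wirtinger_derivs_def
  by (rule has_derivative_eq_rhs, (rule has_derivative_mult; assumption)) (auto simp: algebra_simps)

lemma has_wirtinger_derivs_cmult:
  "has_wirtinger_derivs u a b z \<Longrightarrow> has_wirtinger_derivs (\<lambda>x. k * u x) (k * a) (k * b) z"
  using has_wirtinger_derivs_mult[OF has_wirtinger_derivs_const] by fastforce

lemma has_wirtinger_derivs_cnj:
  "has_wirtinger_derivs u a b z \<Longrightarrow> has_wirtinger_derivs (\<lambda>x. cnj (u x)) (cnj b) (cnj a) z"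
  unfolding has_wirtinger_derivs_def
  by (rule has_derivative_eq_rhs, (rule has_derivative_cnj; assumption)) (auto simp: algebra_simps)

lemma has_wirtinger_derivs_compose:
  "(g has_field_derivative d) (at (u z)) \<Longrightarrow> has_wirtinger_derivs u a b z \<Longrightarrow>
    has_wirtinger_derivs (\<lambda>x. g (u x)) (d * a) (d * b) z"
  unfolding has_wirtinger_derivs_def has_field_derivative_def
  by (rule has_derivative_eq_rhs, (rule has_derivative_compose; assumption)) (auto simp: algebra_simps)

lemma has_wirtinger_derivs_transform_open:
  "has_wirtinger_derivs v a b z \<Longrightarrow> open S \<Longrightarrow> z \<in> S \<Longrightarrow> (\<And>x. x \<in> S \<Longrightarrow> v x = u x) \<Longrightarrow>
    has_wirtinger_derivs u a b z"
  unfolding has_wirtinger_derivs_def by (rule has_derivative_transform_within_open)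

lemma has_wirtinger_derivs_zero_constant_on:
  assumes "connected S" "open S" "\<And>x. x \<in> S \<Longrightarrow> has_wirtinger_derivs u 0 0 x"
  shows "u constant_on S"
proof (rule has_derivative_zero_connected_constant_on[OF assms(1,2) finite.emptyI])
  have d: "(u has_derivative (\<lambda>h. 0)) (at x)" if "x \<in> S" for x
    using assms(3)[OF that] by (simp add: has_wirtinger_derivs_def)
  show "continuous_on S u"
    by (intro continuous_at_imp_continuous_on ballI has_derivative_continuous[OF d])
  show "\<forall>x\<in>S - {}. (u has_derivative (\<lambda>h. 0)) (at x within S)"
    using d has_derivative_at_withinI by blast
qed

lemma has_wirtinger_derivs_real:
  assumes "has_wirtinger_derivs u a b z" "open S" "z \<in> S" "\<And>x. x \<in> S \<Longrightarrow> cnj (u x) = u x"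
  shows "b = cnj a"
proof -
  have "has_wirtinger_derivs u (cnj b) (cnj a) z"
    by (rule has_wirtinger_derivs_transform_open[OF has_wirtinger_derivs_cnj[OF assms(1)] assms(2,3)])
       (use assms(4) in auto)
  then show ?thesis
    using has_wirtinger_derivsD assms(1) by metis
qed

lemma holomorphic_on_if_dzb_zero:
  "open S \<Longrightarrow> (\<And>x. x \<in> S \<Longrightarrow> has_wirtinger_derivs u (a x) 0 x) \<Longrightarrow> u holomorphic_on S"
  using has_wirtinger_derivs_imp_field_derivative holomorphic_on_open by blast

lemma holomorphic_convex_primitive_at:
  assumes "convex S" "open S" "f holomorphic_on S"
  obtains g where "\<And>x. x \<in> S \<Longrightarrow> (g has_field_derivative f x) (at x)"
proof -
  obtain g where "\<And>x. x \<in> S \<Longrightarrow> (g has_field_derivative f x) (at x within S)"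
    using holomorphic_convex_primitive'[OF assms] by blast
  then show ?thesis
    using that at_within_open[OF _ assms(2)] by metis
qed

lemma dz_dzb_holomorphic_form:
  assumes "open U" "p holomorphic_on U" "q holomorphic_on U" "s holomorphic_on U" "t holomorphic_on U"
    and u: "\<And>x. x \<in> U \<Longrightarrow> u x = A * p x * cnj (q x) + s x + cnj (t x)"
    and "z \<in> U"
  shows "dz u z = A * deriv p z * cnj (q z) + deriv s z"
    and "dzb u z = A * p z * cnj (deriv q z) + cnj (deriv t z)"
proof -
  have hol: "(f has_field_derivative deriv f z) (at z)" if "f holomorphic_on U" for f
    using that assms(1,7) by (rule holomorphic_derivI)
  have "((\<lambda>x. A * p x * cnj (q x) + s x + cnj (t x)) has_derivative
      (\<lambda>h. (A * deriv p z * cnj (q z) + deriv s z) * h + (A * p z * cnj (deriv q z) + cnj (deriv t z)) * cnj h)) (at z)"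
    using hol[OF assms(2)] hol[OF assms(3)] hol[OF assms(4)] hol[OF assms(5)]
    unfolding has_field_derivative_def
    by (auto intro!: derivative_eq_intros simp: algebra_simps)
  then have "has_wirtinger_derivs u (A * deriv p z * cnj (q z) + deriv s z) (A * p z * cnj (deriv q z) + cnj (deriv t z)) z"
    unfolding has_wirtinger_derivs_def
    by (rule has_derivative_transform_within_open[OF _ assms(1,7)]) (simp add: u)
  then show "dz u z = A * deriv p z * cnj (q z) + deriv s z"
    and "dzb u z = A * p z * cnj (deriv q z) + cnj (deriv t z)"
    by (simp_all add: has_wirtinger_derivsD)
qed

section \<open>Double power series in \<open>z\<close> and \<open>cnj z\<close>\<close>

definition hom_part :: "(nat \<Rightarrow> nat \<Rightarrow> complex) \<Rightarrow> nat \<Rightarrow> complex \<Rightarrow> complex" where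
  "hom_part c n z = (\<Sum>j\<le>n. c j (n - j) * z ^ j * cnj z ^ (n - j))"

definition hom_norm :: "(nat \<Rightarrow> nat \<Rightarrow> complex) \<Rightarrow> nat \<Rightarrow> real" where
  "hom_norm c n = (\<Sum>j\<le>n. cmod (c j (n - j)))"

definition zzbar_series :: "(nat \<Rightarrow> nat \<Rightarrow> complex) \<Rightarrow> complex \<Rightarrow> complex" where
  "zzbar_series c z = (\<Sum>n. hom_part c n z)"

definition zzbar_normally_convergent :: "(nat \<Rightarrow> nat \<Rightarrow> complex) \<Rightarrow> real \<Rightarrow> bool" where
  "zzbar_normally_convergent c r \<longleftrightarrow> (\<forall>\<rho>. 0 \<le> \<rho> \<longrightarrow> \<rho> < r \<longrightarrow> summable (\<lambda>n. hom_norm c n * \<rho> ^ n))"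

definition coeff_dz :: "(nat \<Rightarrow> nat \<Rightarrow> complex) \<Rightarrow> nat \<Rightarrow> nat \<Rightarrow> complex" where
  "coeff_dz c j k = of_nat (Suc j) * c (Suc j) k"

definition coeff_dzb :: "(nat \<Rightarrow> nat \<Rightarrow> complex) \<Rightarrow> nat \<Rightarrow> nat \<Rightarrow> complex" where
  "coeff_dzb c j k = of_nat (Suc k) * c j (Suc k)"

lemma coeff_dz_coeff_dzb_commute: "coeff_dz (coeff_dzb c) = coeff_dzb (coeff_dz c)"
  by (auto simp: coeff_dz_def coeff_dzb_def fun_eq_iff)

lemma hom_norm_nonneg: "0 \<le> hom_norm c n"
  by (simp add: hom_norm_def sum_nonneg)

lemma norm_hom_part_le: "cmod (hom_part c n z) \<le> hom_norm c n * cmod z ^ n"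
proof -
  have "cmod (hom_part c n z) \<le> (\<Sum>j\<le>n. cmod (c j (n - j) * z ^ j * cnj z ^ (n - j)))"
    unfolding hom_part_def by (rule norm_sum)
  also have "\<dots> = (\<Sum>j\<le>n. cmod (c j (n - j)) * cmod z ^ n)"
    by (intro sum.cong refl) (simp add: norm_mult norm_power power_add[symmetric])
  finally show ?thesis
    by (simp add: hom_norm_def sum_distrib_right)
qed

lemma hom_part_0 [simp]: "hom_part c 0 z = c 0 0"
  by (simp add: hom_part_def)

lemma hom_part_Suc_has_derivative:
  "(hom_part c (Suc n) has_derivative
     (\<lambda>h. hom_part (coeff_dz c) n z * h + hom_part (coeff_dzb c) n z * cnj h)) (at z)"
proof -
  have monomial: "((\<lambda>z. a * z ^ j * cnj z ^ k) has_derivative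
      (\<lambda>h. a * (of_nat j * z ^ (j - 1)) * cnj z ^ k * h + a * z ^ j * (of_nat k * cnj z ^ (k - 1)) * cnj h)) (at z)"
    for a j k
    by (rule has_derivative_eq_rhs, (rule derivative_intros)+) (auto simp: algebra_simps)
  have deriv: "(hom_part c m has_derivative
      (\<lambda>h. (\<Sum>j\<le>m. c j (m - j) * (of_nat j * z ^ (j - 1)) * cnj z ^ (m - j)) * h
         + (\<Sum>j\<le>m. c j (m - j) * z ^ j * (of_nat (m - j) * cnj z ^ (m - j - 1))) * cnj h)) (at z)" for m
  proof -
    have "(hom_part c m has_derivative
      (\<lambda>h. \<Sum>j\<le>m. c j (m - j) * (of_nat j * z ^ (j - 1)) * cnj z ^ (m - j) * h
         + c j (m - j) * z ^ j * (of_nat (m - j) * cnj z ^ (m - j - 1)) * cnj h)) (at z)"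
      unfolding hom_part_def by (intro has_derivative_sum monomial)
    then show ?thesis
      by (rule has_derivative_eq_rhs) (simp add: fun_eq_iff sum.distrib sum_distrib_right)
  qed
  have dz_part: "(\<Sum>j\<le>Suc n. c j (Suc n - j) * (of_nat j * z ^ (j - 1)) * cnj z ^ (Suc n - j))
      = hom_part (coeff_dz c) n z"
    unfolding hom_part_def coeff_dz_def by (subst sum.atMost_Suc_shift) (simp add: mult_ac)
  have dzb_part: "(\<Sum>j\<le>Suc n. c j (Suc n - j) * z ^ j * (of_nat (Suc n - j) * cnj z ^ (Suc n - j - 1)))
      = hom_part (coeff_dzb c) n z"
    unfolding hom_part_def coeff_dzb_def
    by (subst sum.atMost_Suc) (auto intro!: sum.cong simp: Suc_diff_le mult_ac)
  show ?thesis
    using deriv[of "Suc n"] unfolding dz_part dzb_part .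
qed

lemma zzbar_normally_convergent_mono:
  "zzbar_normally_convergent c r \<Longrightarrow> r' \<le> r \<Longrightarrow> zzbar_normally_convergent c r'"
  unfolding zzbar_normally_convergent_def by auto

lemma zzbar_normally_convergent_sums:
  assumes "zzbar_normally_convergent c r" "cmod z < r"
  shows "(\<lambda>n. hom_part c n z) sums zzbar_series c z"
proof -
  have "summable (\<lambda>n. hom_norm c n * cmod z ^ n)"
    using assms unfolding zzbar_normally_convergent_def by simp
  then have "summable (\<lambda>n. cmod (hom_part c n z))"
    by (rule summable_comparison_test[rotated]) (simp add: norm_hom_part_le)
  then show ?thesis
    unfolding zzbar_series_def by (rule summable_sums[OF summable_norm_cancel])
qed

lemma zzbar_normally_convergent_uniform_limit:
  assumes "zzbar_normally_convergent c r" "0 \<le> \<rho>" "\<rho> < r"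
  shows "uniform_limit (ball 0 \<rho>) (\<lambda>n x. \<Sum>i<n. hom_part c i x) (zzbar_series c) sequentially"
  unfolding zzbar_series_def[abs_def]
proof (rule Weierstrass_m_test_ev)
  show "summable (\<lambda>n. hom_norm c n * \<rho> ^ n)"
    using assms unfolding zzbar_normally_convergent_def by simp
  have "norm (hom_part c n x) \<le> hom_norm c n * \<rho> ^ n" if "x \<in> ball 0 \<rho>" for n x
  proof -
    have "hom_norm c n * cmod x ^ n \<le> hom_norm c n * \<rho> ^ n"
      using that by (intro mult_left_mono power_mono hom_norm_nonneg) auto
    then show ?thesis
      using norm_hom_part_le order_trans by blast
  qed
  then show "\<forall>\<^sub>F n in sequentially. \<forall>x\<in>ball 0 \<rho>. norm (hom_part c n x) \<le> hom_norm c n * \<rho> ^ n"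
    by (intro always_eventually allI ballI)
qed

lemma hom_norm_coeff_dz_le: "hom_norm (coeff_dz c) n \<le> diffs (hom_norm c) n"
proof -
  have "hom_norm (coeff_dz c) n = (\<Sum>j\<le>n. of_nat (Suc j) * cmod (c (Suc j) (n - j)))"
    by (simp only: hom_norm_def coeff_dz_def norm_mult norm_of_nat)
  also have "\<dots> \<le> of_nat (Suc n) * (\<Sum>j\<le>n. cmod (c (Suc j) (n - j)))"
    unfolding sum_distrib_left by (intro sum_mono mult_right_mono) auto
  also have "\<dots> \<le> of_nat (Suc n) * hom_norm c (Suc n)"
  proof -
    have "hom_norm c (Suc n) = cmod (c 0 (Suc n)) + (\<Sum>j\<le>n. cmod (c (Suc j) (n - j)))"
      unfolding hom_norm_def by (subst sum.atMost_Suc_shift) simp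
    then show ?thesis
      by (simp add: mult_left_mono)
  qed
  finally show ?thesis
    by (simp add: diffs_def)
qed

lemma hom_norm_coeff_dzb_le: "hom_norm (coeff_dzb c) n \<le> diffs (hom_norm c) n"
proof -
  have "hom_norm (coeff_dzb c) n = (\<Sum>j\<le>n. of_nat (Suc (n - j)) * cmod (c j (Suc n - j)))"
    unfolding hom_norm_def coeff_dzb_def norm_mult norm_of_nat
    by (intro sum.cong) (simp_all add: Suc_diff_le)
  also have "\<dots> \<le> of_nat (Suc n) * (\<Sum>j\<le>n. cmod (c j (Suc n - j)))"
    unfolding sum_distrib_left by (intro sum_mono mult_right_mono) auto
  also have "\<dots> \<le> of_nat (Suc n) * hom_norm c (Suc n)"
    unfolding hom_norm_def sum.atMost_Suc by (auto intro!: mult_left_mono)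
  finally show ?thesis
    by (simp add: diffs_def)
qed

lemma zzbar_normally_convergent_diffs:
  assumes "zzbar_normally_convergent c r" "0 \<le> \<rho>" "\<rho> < r"
  shows "summable (\<lambda>n. diffs (hom_norm c) n * \<rho> ^ n)"
proof (rule termdiff_converges[where K = "(\<rho> + r) / 2"])
  show "norm \<rho> < (\<rho> + r) / 2"
    using assms by auto
  fix x :: real
  assume "norm x < (\<rho> + r) / 2"
  then have "summable (\<lambda>n. hom_norm c n * \<bar>x\<bar> ^ n)"
    using assms unfolding zzbar_normally_convergent_def by auto
  then show "summable (\<lambda>n. hom_norm c n * x ^ n)"
    by (rule summable_comparison_test[rotated]) (auto simp: abs_mult power_abs hom_norm_nonneg)
qed

lemma zzbar_normally_convergent_coeff_dz:
  assumes "zzbar_normally_convergent c r"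
  shows "zzbar_normally_convergent (coeff_dz c) r"
  unfolding zzbar_normally_convergent_def
proof (intro allI impI)
  fix \<rho> :: real
  assume "0 \<le> \<rho>" "\<rho> < r"
  then show "summable (\<lambda>n. hom_norm (coeff_dz c) n * \<rho> ^ n)"
    by (intro summable_comparison_test[OF _ zzbar_normally_convergent_diffs[OF assms]])
       (auto intro!: mult_right_mono hom_norm_coeff_dz_le simp: hom_norm_nonneg)
qed

lemma zzbar_normally_convergent_coeff_dzb:
  assumes "zzbar_normally_convergent c r"
  shows "zzbar_normally_convergent (coeff_dzb c) r"
  unfolding zzbar_normally_convergent_def
proof (intro allI impI)
  fix \<rho> :: real
  assume "0 \<le> \<rho>" "\<rho> < r"
  then show "summable (\<lambda>n. hom_norm (coeff_dzb c) n * \<rho> ^ n)"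
    by (intro summable_comparison_test[OF _ zzbar_normally_convergent_diffs[OF assms]])
       (auto intro!: mult_right_mono hom_norm_coeff_dzb_le simp: hom_norm_nonneg)
qed

lemma uniform_limit_imp_uniform_wirtinger_limit:
  assumes "uniform_limit S (\<lambda>n x. \<Sum>i<n. a i x) A sequentially"
    and "uniform_limit S (\<lambda>n x. \<Sum>i<n. b i x) B sequentially"
    and "e > 0"
  shows "\<forall>\<^sub>F n in sequentially. \<forall>x\<in>S. \<forall>h.
    norm ((\<Sum>i<n. a i x * h + b i x * cnj h) - (A x * h + B x * cnj h)) \<le> e * norm h"
proof -
  have "\<forall>\<^sub>F n in sequentially. \<forall>x\<in>S. dist (\<Sum>i<n. a i x) (A x) < e / 2"
    using uniform_limitD[OF assms(1), of "e / 2"] assms(3) by simp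
  moreover have "\<forall>\<^sub>F n in sequentially. \<forall>x\<in>S. dist (\<Sum>i<n. b i x) (B x) < e / 2"
    using uniform_limitD[OF assms(2), of "e / 2"] assms(3) by simp
  ultimately show ?thesis
  proof eventually_elim
    case (elim n)
    show ?case
    proof (intro ballI allI)
      fix x h
      assume x: "x \<in> S"
      have "(\<Sum>i<n. a i x * h + b i x * cnj h) - (A x * h + B x * cnj h)
          = ((\<Sum>i<n. a i x) - A x) * h + ((\<Sum>i<n. b i x) - B x) * cnj h"
        by (simp add: sum.distrib sum_distrib_right sum_distrib_left algebra_simps)
      also have "norm \<dots> \<le> norm ((\<Sum>i<n. a i x) - A x) * norm h + norm ((\<Sum>i<n. b i x) - B x) * norm h"
        by (rule order_trans[OF norm_triangle_ineq]) (simp add: norm_mult)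
      also have "\<dots> \<le> e / 2 * norm h + e / 2 * norm h"
        using elim x by (intro add_mono mult_right_mono) (auto simp: dist_norm less_imp_le)
      finally show "norm ((\<Sum>i<n. a i x * h + b i x * cnj h) - (A x * h + B x * cnj h)) \<le> e * norm h"
        by simp
    qed
  qed
qed

lemma zzbar_series_tail_has_derivative:
  fixes z :: complex
  assumes conv: "zzbar_normally_convergent c r" and "0 \<le> \<rho>" "\<rho> < r" "z \<in> ball 0 \<rho>"
  shows "\<exists>g. \<forall>x\<in>ball 0 \<rho>. (\<lambda>n. hom_part c (Suc n) x) sums g x \<and>
    (g has_derivative (\<lambda>h. zzbar_series (coeff_dz c) x * h + zzbar_series (coeff_dzb c) x * cnj h))
      (at x within ball 0 \<rho>)"
proof (rule has_derivative_series[of _ _ _ _ z])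
  show "((hom_part c (Suc n)) has_derivative
      (\<lambda>h. hom_part (coeff_dz c) n x * h + hom_part (coeff_dzb c) n x * cnj h)) (at x within ball 0 \<rho>)"
    for n x
    by (rule has_derivative_at_withinI[OF hom_part_Suc_has_derivative])
  show "(\<lambda>n. hom_part c (Suc n) z) sums (zzbar_series c z - c 0 0)"
    using zzbar_normally_convergent_sums[OF conv] assms(3,4) by (subst sums_Suc_iff) simp
  show "\<forall>\<^sub>F n in sequentially. \<forall>x\<in>ball 0 \<rho>. \<forall>h.
      norm ((\<Sum>i<n. hom_part (coeff_dz c) i x * h + hom_part (coeff_dzb c) i x * cnj h)
        - (zzbar_series (coeff_dz c) x * h + zzbar_series (coeff_dzb c) x * cnj h)) \<le> e * norm h"
    if "e > 0" for e
    by (intro uniform_limit_imp_uniform_wirtinger_limit that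
        zzbar_normally_convergent_uniform_limit[OF zzbar_normally_convergent_coeff_dz[OF conv] assms(2,3)]
        zzbar_normally_convergent_uniform_limit[OF zzbar_normally_convergent_coeff_dzb[OF conv] assms(2,3)])
qed (use assms in simp_all)

lemma zzbar_series_has_derivative:
  assumes conv: "zzbar_normally_convergent c r" and z: "cmod z < r"
  shows "(zzbar_series c has_derivative
           (\<lambda>h. zzbar_series (coeff_dz c) z * h + zzbar_series (coeff_dzb c) z * cnj h)) (at z)"
proof -
  define \<rho> where "\<rho> = (cmod z + r) / 2"
  have "0 < r"
    using z norm_ge_zero[of z] by linarith
  then have \<rho>: "0 \<le> \<rho>" "\<rho> < r" and z\<rho>: "z \<in> ball 0 \<rho>"
    using z unfolding \<rho>_def by simp_all
  obtain g where g: "\<And>x. x \<in> ball 0 \<rho> \<Longrightarrow> (\<lambda>n. hom_part c (Suc n) x) sums g x \<and>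
      (g has_derivative (\<lambda>h. zzbar_series (coeff_dz c) x * h + zzbar_series (coeff_dzb c) x * cnj h))
        (at x within ball 0 \<rho>)"
    using zzbar_series_tail_has_derivative[OF conv \<rho> z\<rho>] by blast
  have series_eq: "g x + c 0 0 = zzbar_series c x" if "x \<in> ball 0 \<rho>" for x
  proof -
    have "(\<lambda>n. hom_part c n x) sums (g x + c 0 0)"
      using g[OF that] by (subst (asm) sums_Suc_iff) simp
    moreover have "cmod x < r"
      using that \<rho> by simp
    ultimately show ?thesis
      using zzbar_normally_convergent_sums[OF conv] sums_unique2 by blast
  qed
  have "((\<lambda>x. g x + c 0 0) has_derivative
      (\<lambda>h. zzbar_series (coeff_dz c) z * h + zzbar_series (coeff_dzb c) z * cnj h)) (at z)"
    using g[OF z\<rho>] unfolding at_within_open[OF z\<rho> open_ball] by (intro has_derivative_add_const) blast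
  then show ?thesis
    by (rule has_derivative_transform_within_open[OF _ open_ball z\<rho> series_eq])
qed

lemma has_sum_imp_sums_antidiagonal:
  fixes g :: "nat \<times> nat \<Rightarrow> 'a::{banach,uniform_topological_group_add}"
  assumes "(g has_sum s) UNIV"
  shows "(\<lambda>n. \<Sum>j\<le>n. g (j, n - j)) sums s"
proof -
  have bij: "bij_betw (\<lambda>(n::nat, j::nat). (j, n - j)) (SIGMA n:UNIV. {..n}) UNIV"
    by (rule bij_betw_byWitness[where f' = "\<lambda>(j, k). (j + k, j)"]) auto
  have "((\<lambda>x. g ((\<lambda>(n, j). (j, n - j)) x)) has_sum s) (SIGMA n:UNIV. {..n})"
    using has_sum_reindex_bij_betw[OF bij, of g s] assms by simp
  then have "((\<lambda>n. \<Sum>j\<le>n. g (j, n - j)) has_sum s) UNIV"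
  proof (rule has_sum_Sigma'[where b = "\<lambda>n. \<Sum>j\<le>n. g (j, n - j)"])
    show "((\<lambda>j. g (case (n, j) of (n, j) \<Rightarrow> (j, n - j))) has_sum (\<Sum>j\<le>n. g (j, n - j))) {..n}" for n
      using has_sum_finite[of "{..n}" "\<lambda>j. g (j, n - j)"] by simp
  qed
  then show ?thesis
    by (rule has_sum_imp_sums)
qed

definition zzbar_analytic :: "real \<Rightarrow> (complex \<Rightarrow> complex) \<Rightarrow> bool" where
  "zzbar_analytic r u \<longleftrightarrow> (\<exists>c. zzbar_normally_convergent c r \<and> (\<forall>z\<in>ball 0 r. u z = zzbar_series c z))"

lemma real_analytic_near0_imp_zzbar_analytic:
  assumes "real_analytic_near0 F"
  shows "\<exists>r>0. zzbar_analytic r (\<lambda>z. complex_of_real (F z))"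
proof -
  obtain r c where "r > 0" and has_sum: "\<And>z. z \<in> ball 0 r \<Longrightarrow>
      ((\<lambda>(j, k). c j k * z ^ j * cnj z ^ k) has_sum complex_of_real (F z)) UNIV"
    using assms unfolding real_analytic_near0_def by blast
  have "summable (\<lambda>n. hom_norm c n * \<rho> ^ n)" if \<rho>: "0 \<le> \<rho>" "\<rho> < r" for \<rho>
  proof -
    define x where "x = complex_of_real \<rho>"
    have "(\<lambda>(j, k). c j k * x ^ j * cnj x ^ k) summable_on UNIV"
      using has_sum[of x] \<rho> by (auto simp: x_def intro: has_sum_imp_summable)
    then have "((\<lambda>p. norm ((\<lambda>(j, k). c j k * x ^ j * cnj x ^ k) p)) has_sum
        (\<Sum>\<^sub>\<infinity>p. norm ((\<lambda>(j, k). c j k * x ^ j * cnj x ^ k) p))) UNIV"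
      by (simp add: summable_on_iff_abs_summable_on_complex summable_iff_has_sum_infsum)
    then have "summable (\<lambda>n. \<Sum>j\<le>n. norm (c j (n - j) * x ^ j * cnj x ^ (n - j)))"
      using has_sum_imp_sums_antidiagonal sums_summable by fastforce
    moreover have "(\<Sum>j\<le>n. norm (c j (n - j) * x ^ j * cnj x ^ (n - j))) = hom_norm c n * \<rho> ^ n" for n
      unfolding hom_norm_def sum_distrib_right x_def
      by (intro sum.cong refl) (simp add: norm_mult norm_power \<rho>(1) power_add[symmetric])
    ultimately show ?thesis
      by simp
  qed
  moreover have "complex_of_real (F z) = zzbar_series c z" if "z \<in> ball 0 r" for z
    using has_sum_imp_sums_antidiagonal[OF has_sum[OF that]]
    by (simp add: zzbar_series_def hom_part_def sums_iff)
  ultimately show ?thesis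
    using \<open>r > 0\<close> unfolding zzbar_analytic_def zzbar_normally_convergent_def by blast
qed

lemma zzbar_analytic_mono: "zzbar_analytic r u \<Longrightarrow> r' \<le> r \<Longrightarrow> zzbar_analytic r' u"
  unfolding zzbar_analytic_def using zzbar_normally_convergent_mono by fastforce

lemma zzbar_series_has_wirtinger_derivs:
  assumes "zzbar_normally_convergent c r" "\<And>x. x \<in> ball 0 r \<Longrightarrow> u x = zzbar_series c x" "z \<in> ball 0 r"
  shows "has_wirtinger_derivs u (zzbar_series (coeff_dz c) z) (zzbar_series (coeff_dzb c) z) z"
proof (rule has_wirtinger_derivs_transform_open[OF _ open_ball assms(3)])
  show "has_wirtinger_derivs (zzbar_series c) (zzbar_series (coeff_dz c) z) (zzbar_series (coeff_dzb c) z) z"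
    unfolding has_wirtinger_derivs_def using assms(1,3) by (simp add: zzbar_series_has_derivative)
qed (use assms(2) in auto)

lemma zzbar_series_dz_dzb:
  assumes "zzbar_normally_convergent c r" "\<And>x. x \<in> ball 0 r \<Longrightarrow> u x = zzbar_series c x" "z \<in> ball 0 r"
  shows "dz u z = zzbar_series (coeff_dz c) z" "dzb u z = zzbar_series (coeff_dzb c) z"
  using has_wirtinger_derivsD[OF zzbar_series_has_wirtinger_derivs[OF assms]] by simp_all

lemma zzbar_analytic_dz:
  assumes "zzbar_analytic r u"
  shows "zzbar_analytic r (dz u)"
proof -
  obtain c where "zzbar_normally_convergent c r" "\<And>x. x \<in> ball 0 r \<Longrightarrow> u x = zzbar_series c x"
    using assms unfolding zzbar_analytic_def by blast
  then show ?thesis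
    unfolding zzbar_analytic_def using zzbar_normally_convergent_coeff_dz zzbar_series_dz_dzb(1) by blast
qed

lemma zzbar_analytic_dzb:
  assumes "zzbar_analytic r u"
  shows "zzbar_analytic r (dzb u)"
proof -
  obtain c where "zzbar_normally_convergent c r" "\<And>x. x \<in> ball 0 r \<Longrightarrow> u x = zzbar_series c x"
    using assms unfolding zzbar_analytic_def by blast
  then show ?thesis
    unfolding zzbar_analytic_def using zzbar_normally_convergent_coeff_dzb zzbar_series_dz_dzb(2) by blast
qed

lemma zzbar_analytic_has_wirtinger_derivs:
  assumes "zzbar_analytic r u" "z \<in> ball 0 r"
  shows "has_wirtinger_derivs u (dz u z) (dzb u z) z"
proof -
  obtain c where c: "zzbar_normally_convergent c r" "\<And>x. x \<in> ball 0 r \<Longrightarrow> u x = zzbar_series c x"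
    using assms(1) unfolding zzbar_analytic_def by blast
  show ?thesis
    using zzbar_series_has_wirtinger_derivs[OF c assms(2)] zzbar_series_dz_dzb[OF c assms(2)] by simp
qed

lemma zzbar_analytic_dz_dzb_commute:
  assumes "zzbar_analytic r u" "z \<in> ball 0 r"
  shows "dz (dzb u) z = dzb (dz u) z"
proof -
  obtain c where conv: "zzbar_normally_convergent c r" and u: "\<And>x. x \<in> ball 0 r \<Longrightarrow> u x = zzbar_series c x"
    using assms(1) unfolding zzbar_analytic_def by blast
  have "dz (dzb u) z = zzbar_series (coeff_dz (coeff_dzb c)) z"
    by (rule zzbar_series_dz_dzb(1)[OF zzbar_normally_convergent_coeff_dzb[OF conv] zzbar_series_dz_dzb(2)[OF conv u] assms(2)])
  moreover have "dzb (dz u) z = zzbar_series (coeff_dzb (coeff_dz c)) z"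
    by (rule zzbar_series_dz_dzb(2)[OF zzbar_normally_convergent_coeff_dz[OF conv] zzbar_series_dz_dzb(1)[OF conv u] assms(2)])
  ultimately show ?thesis
    by (simp add: coeff_dz_coeff_dzb_commute)
qed

section \<open>Necessity of the curvature condition\<close>

lemma sphere_equation_as_hermitian_form:
  fixes a :: real
  assumes "a \<noteq> 0" "a * F + Re w = (cmod \<zeta>)\<^sup>2"
  defines "A \<equiv> complex_of_real (inverse a)"
  shows "complex_of_real F = A * \<zeta> * cnj \<zeta> + (- A / 2 * w) + cnj (- A / 2 * w)"
proof -
  have "F = inverse a * ((cmod \<zeta>)\<^sup>2 - Re w)"
    using assms(1,2) by (simp add: field_simps)
  then have "complex_of_real F = A * (of_real ((cmod \<zeta>)\<^sup>2) - of_real (Re w))"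
    by (simp add: A_def)
  also have "\<dots> = A * (\<zeta> * cnj \<zeta>) - A * (w + cnj w) / 2"
    unfolding complex_norm_square by (simp add: complex_add_cnj right_diff_distrib)
  also have "\<dots> = A * \<zeta> * cnj \<zeta> + (- A / 2 * w) + cnj (- A / 2 * w)"
    by (simp add: A_def algebra_simps)
  finally show ?thesis .
qed

lemma rigid_sphere_equation_imp_curvature_zero:
  fixes F :: "complex \<Rightarrow> real" and a :: real
  defines "Fc \<equiv> \<lambda>z. complex_of_real (F z)"
  assumes U: "open U" and f: "f holomorphic_on U" and g: "g holomorphic_on U" and "a \<noteq> 0"
    and sphere: "\<And>x. x \<in> U \<Longrightarrow> a * F x + Re (g x) = (cmod (f x))\<^sup>2"
    and z: "z \<in> U"
  shows "dz (dz (dzb (dzb Fc))) z * dz (dzb Fc) z - dz (dz (dzb Fc)) z * dz (dzb (dzb Fc)) z = 0"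
proof -
  define A where "A = complex_of_real (inverse a)"
  define t where "t x = - A / 2 * g x" for x
  define f1 where "f1 = deriv f"
  define f2 where "f2 = deriv f1"
  have hol: "f1 holomorphic_on U" "f2 holomorphic_on U" "t holomorphic_on U"
    "deriv t holomorphic_on U" "deriv (deriv t) holomorphic_on U"
    unfolding f1_def f2_def t_def using f g U by (auto intro!: holomorphic_intros holomorphic_deriv)
  note form = dz_dzb_holomorphic_form[OF U]
  have Fc: "Fc x = A * f x * cnj (f x) + t x + cnj (t x)" if "x \<in> U" for x
    unfolding Fc_def A_def t_def using \<open>a \<noteq> 0\<close> sphere[OF that] by (rule sphere_equation_as_hermitian_form)
  \<comment> \<open>The summands \<open>0\<close> fill the slots \<open>s\<close>, \<open>t\<close> of \<open>dz_dzb_holomorphic_form\<close>.\<close>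
  have dzb_Fc: "dzb Fc x = A * f x * cnj (f1 x) + 0 + cnj (deriv t x)" if "x \<in> U" for x
    using form(2)[OF f f hol(3) hol(3) Fc that] by (simp add: f1_def)
  have dz_dzb_Fc: "dz (dzb Fc) x = A * f1 x * cnj (f1 x) + 0 + cnj 0" if "x \<in> U" for x
    using form(1)[OF f hol(1) holomorphic_on_const hol(4) dzb_Fc that] by (simp add: f1_def)
  have dzb_dzb_Fc: "dzb (dzb Fc) x = A * f x * cnj (f2 x) + 0 + cnj (deriv (deriv t) x)" if "x \<in> U" for x
    using form(2)[OF f hol(1) holomorphic_on_const hol(4) dzb_Fc that] by (simp add: f2_def)
  have "dz (dz (dzb Fc)) z = A * f2 z * cnj (f1 z)"
    using form(1)[OF hol(1) hol(1) holomorphic_on_const holomorphic_on_const dz_dzb_Fc z] by (simp add: f2_def)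
  moreover have dz_dzb_dzb_Fc: "dz (dzb (dzb Fc)) x = A * f1 x * cnj (f2 x) + 0 + cnj 0" if "x \<in> U" for x
    using form(1)[OF f hol(2) holomorphic_on_const hol(5) dzb_dzb_Fc that] by (simp add: f1_def)
  moreover have "dz (dz (dzb (dzb Fc))) z = A * f2 z * cnj (f2 z)"
    using form(1)[OF hol(1) hol(2) holomorphic_on_const holomorphic_on_const dz_dzb_dzb_Fc z] by (simp add: f2_def)
  ultimately show ?thesis
    using dz_dzb_Fc[OF z] z by simp
qed

lemma curvature_zero_if_rigidly_equiv_sphere_at0:
  fixes F :: "complex \<Rightarrow> real"
  defines "Fc \<equiv> \<lambda>z. complex_of_real (F z)"
  assumes "rigidly_equiv_sphere_at0 F"
  shows "\<exists>r>0. \<forall>z\<in>ball 0 r.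
    dz (dz (dzb (dzb Fc))) z * dz (dzb Fc) z - dz (dz (dzb Fc)) z * dz (dzb (dzb Fc)) z = 0"
proof -
  obtain U f g a where U: "open U" "0 \<in> U" and hol: "f holomorphic_on U" "g holomorphic_on U"
    and "a \<noteq> 0" and image: "rigid_map f a g ` (rigid_hyp F \<inter> (U \<times> UNIV)) \<subseteq> heisenberg"
    using assms unfolding rigidly_equiv_sphere_at0_def by blast
  have "a * F z + Re (g z) = (cmod (f z))\<^sup>2" if "z \<in> U" for z
  proof -
    have "rigid_map f a g (z, complex_of_real (F z)) \<in> heisenberg"
      using image that by (auto simp: rigid_hyp_def)
    then show ?thesis
      by (simp add: rigid_map_def heisenberg_def)
  qed
  moreover obtain r where "r > 0" "ball 0 r \<subseteq> U"
    using U open_contains_ball by blast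
  ultimately show ?thesis
    unfolding Fc_def using rigid_sphere_equation_imp_curvature_zero[OF U(1) hol \<open>a \<noteq> 0\<close>] by blast
qed

section \<open>Sufficiency of the curvature condition\<close>

lemma zzbar_analytic_real_imp_dz_dzb_real:
  assumes u: "zzbar_analytic r u" and real: "\<And>x. x \<in> ball 0 r \<Longrightarrow> cnj (u x) = u x"
    and z: "z \<in> ball 0 r"
  shows "cnj (dz (dzb u) z) = dz (dzb u) z"
proof -
  have "dzb u x = cnj (dz u x)" if "x \<in> ball 0 r" for x
    using zzbar_analytic_has_wirtinger_derivs[OF u that] open_ball that real
    by (rule has_wirtinger_derivs_real)
  then have "dz (dzb u) z = dz (\<lambda>x. cnj (dz u x)) z"
    by (rule dz_cong_open[OF open_ball z])
  also have "\<dots> = cnj (dzb (dz u) z)"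
    using has_wirtinger_derivsD(1)[OF has_wirtinger_derivs_cnj[OF
        zzbar_analytic_has_wirtinger_derivs[OF zzbar_analytic_dz[OF u] z]]] .
  also have "\<dots> = cnj (dz (dzb u) z)"
    by (simp add: zzbar_analytic_dz_dzb_commute[OF u z])
  finally show ?thesis
    by simp
qed

lemma zzbar_analytic_curvature_eq:
  assumes u: "zzbar_analytic r u" and z: "z \<in> ball 0 r"
  defines "h \<equiv> dz (dzb u)"
  shows "dz (dz (dzb (dzb u))) z * dz (dzb u) z - dz (dz (dzb u)) z * dz (dzb (dzb u)) z
    = dzb (dz h) z * h z - dz h z * dzb h z"
proof -
  have h: "zzbar_analytic r h"
    unfolding h_def by (intro zzbar_analytic_dz zzbar_analytic_dzb u)
  have "dz (dzb (dzb u)) x = dzb h x" if "x \<in> ball 0 r" for x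
    unfolding h_def using zzbar_analytic_dzb[OF u] that by (rule zzbar_analytic_dz_dzb_commute)
  then have "dz (dz (dzb (dzb u))) z = dz (dzb h) z"
    by (rule dz_cong_open[OF open_ball z])
  also have "\<dots> = dzb (dz h) z"
    using h z by (rule zzbar_analytic_dz_dzb_commute)
  finally show ?thesis
    using \<open>\<And>x. x \<in> ball 0 r \<Longrightarrow> dz (dzb (dzb u)) x = dzb h x\<close>[OF z] by (simp add: h_def)
qed

lemma holomorphic_dz_over_if_log_harmonic:
  assumes "open S"
    and h: "\<And>x. x \<in> S \<Longrightarrow> has_wirtinger_derivs h (dz h x) (dzb h x) x"
    and dz_h: "\<And>x. x \<in> S \<Longrightarrow> has_wirtinger_derivs (dz h) (dz (dz h) x) (dzb (dz h) x) x"
    and nonzero: "\<And>x. x \<in> S \<Longrightarrow> h x \<noteq> 0"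
    and log_harmonic: "\<And>x. x \<in> S \<Longrightarrow> dzb (dz h) x * h x = dz h x * dzb h x"
  shows "(\<lambda>x. dz h x / h x) holomorphic_on S"
proof (rule holomorphic_on_if_dzb_zero[OF \<open>open S\<close>])
  fix x
  assume x: "x \<in> S"
  have "has_wirtinger_derivs (\<lambda>x. dz h x / h x)
      (dz (dz h) x * inverse (h x) + dz h x * (- (inverse (h x) ^ Suc (Suc 0)) * dz h x))
      (dzb (dz h) x * inverse (h x) + dz h x * (- (inverse (h x) ^ Suc (Suc 0)) * dzb h x)) x"
    unfolding divide_inverse
    by (rule has_wirtinger_derivs_mult[OF dz_h[OF x]
        has_wirtinger_derivs_compose[OF DERIV_inverse[OF nonzero[OF x]] h[OF x]]])
  then show "has_wirtinger_derivs (\<lambda>x. dz h x / h x)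
      (dz (dz h) x * inverse (h x) + dz h x * (- (inverse (h x) ^ Suc (Suc 0)) * dz h x)) 0 x"
    by (rule has_wirtinger_derivs_eq_rhs)
       (use log_harmonic[OF x] nonzero[OF x] in \<open>simp_all add: field_simps\<close>)
qed

lemma real_eq_const_norm_square_exp:
  assumes S: "open S" "convex S"
    and h: "\<And>x. x \<in> S \<Longrightarrow> has_wirtinger_derivs h (dz h x) (dzb h x) x"
    and real: "\<And>x. x \<in> S \<Longrightarrow> cnj (h x) = h x"
    and q: "q holomorphic_on S" "\<And>x. x \<in> S \<Longrightarrow> dz h x = q x * h x"
  shows "\<exists>(\<kappa>::real) Q. Q holomorphic_on S \<and> (\<forall>x\<in>S. h x = \<kappa> * exp (Q x) * cnj (exp (Q x)))"
proof -
  obtain Q where Q: "\<And>x. x \<in> S \<Longrightarrow> (Q has_field_derivative q x) (at x)"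
    using holomorphic_convex_primitive_at[OF S(2,1) q(1)] by blast
  \<comment> \<open>Since \<open>dz h = q h\<close> and \<open>dzb h = cnj q h\<close>, both Wirtinger derivatives of \<open>k\<close> vanish.\<close>
  define k where "k x = h x * exp (- Q x) * cnj (exp (- Q x))" for x
  have "has_wirtinger_derivs k 0 0 x" if x: "x \<in> S" for x
  proof -
    have E: "has_wirtinger_derivs (\<lambda>x. exp (- Q x)) (exp (- Q x) * - q x) 0 x"
      using has_wirtinger_derivs_compose[OF DERIV_exp has_wirtinger_derivs_holomorphic[OF DERIV_minus[OF Q[OF x]]]]
      by simp
    have "dzb h x = cnj (q x) * h x"
      using has_wirtinger_derivs_real[OF h[OF x] S(1) x real] q(2)[OF x] real[OF x] by simp
    then show ?thesis
      unfolding k_def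
      using has_wirtinger_derivs_mult[OF has_wirtinger_derivs_mult[OF h[OF x] E] has_wirtinger_derivs_cnj[OF E]]
      by (auto elim!: has_wirtinger_derivs_eq_rhs simp: q(2)[OF x] algebra_simps)
  qed
  then obtain k0 where k0: "\<And>x. x \<in> S \<Longrightarrow> k x = k0"
    using has_wirtinger_derivs_zero_constant_on[OF convex_connected[OF S(2)] S(1)]
    unfolding constant_on_def by blast
  have "h x = Re k0 * exp (Q x) * cnj (exp (Q x))" if x: "x \<in> S" for x
  proof -
    have "cnj k0 = k0"
      using k0[OF x] real[OF x] by (auto simp: k_def)
    then have "k0 = of_real (Re k0)"
      using complex_eq_iff by auto
    moreover have "h x = k0 * exp (Q x) * cnj (exp (Q x))"
      using k0[OF x] by (simp add: k_def exp_minus field_simps)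
    ultimately show ?thesis
      by metis
  qed
  moreover have "Q holomorphic_on S"
    using Q S(1) holomorphic_on_open by blast
  ultimately show ?thesis
    by blast
qed

lemma log_harmonic_imp_norm_square_deriv:
  assumes S: "open S" "convex S"
    and h: "\<And>x. x \<in> S \<Longrightarrow> has_wirtinger_derivs h (dz h x) (dzb h x) x"
    and dz_h: "\<And>x. x \<in> S \<Longrightarrow> has_wirtinger_derivs (dz h) (dz (dz h) x) (dzb (dz h) x) x"
    and real: "\<And>x. x \<in> S \<Longrightarrow> cnj (h x) = h x"
    and nonzero: "\<And>x. x \<in> S \<Longrightarrow> h x \<noteq> 0"
    and log_harmonic: "\<And>x. x \<in> S \<Longrightarrow> dzb (dz h) x * h x = dz h x * dzb h x"
  shows "\<exists>(\<kappa>::real) f. f holomorphic_on S \<and>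
    (\<forall>x\<in>S. deriv f x \<noteq> 0 \<and> h x = \<kappa> * deriv f x * cnj (deriv f x))"
proof -
  have "(\<lambda>x. dz h x / h x) holomorphic_on S" "\<And>x. x \<in> S \<Longrightarrow> dz h x = dz h x / h x * h x"
    using holomorphic_dz_over_if_log_harmonic[OF S(1) h dz_h nonzero log_harmonic] nonzero by simp_all
  then obtain \<kappa> :: real and Q :: "complex \<Rightarrow> complex" where Q: "Q holomorphic_on S"
    and h_eq: "\<And>x. x \<in> S \<Longrightarrow> h x = \<kappa> * exp (Q x) * cnj (exp (Q x))"
    using real_eq_const_norm_square_exp[OF S h real] by blast
  have "(\<lambda>x. exp (Q x)) holomorphic_on S"
    using Q by (intro holomorphic_intros)
  then obtain f where f: "\<And>x. x \<in> S \<Longrightarrow> (f has_field_derivative exp (Q x)) (at x)"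
    using holomorphic_convex_primitive_at[OF S(2,1)] by blast
  have "f holomorphic_on S"
    using f S(1) holomorphic_on_open by blast
  moreover have "deriv f x = exp (Q x)" if "x \<in> S" for x
    using f[OF that] by (rule DERIV_imp_deriv)
  ultimately show ?thesis
    using h_eq by (intro exI[of _ \<kappa>] exI[of _ f]) simp
qed

lemma real_eq_Re_holomorphic_if_dz_holomorphic:
  assumes S: "open S" "convex S" and "\<phi> holomorphic_on S"
    and u: "\<And>x. x \<in> S \<Longrightarrow> has_wirtinger_derivs u (\<phi> x) (dzb u x) x"
    and real: "\<And>x. x \<in> S \<Longrightarrow> cnj (u x) = u x"
  shows "\<exists>\<Phi> (c::real). \<Phi> holomorphic_on S \<and> (\<forall>x\<in>S. u x = of_real (c + 2 * Re (\<Phi> x)))"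
proof -
  obtain \<Phi> where \<Phi>: "\<And>x. x \<in> S \<Longrightarrow> (\<Phi> has_field_derivative \<phi> x) (at x)"
    using holomorphic_convex_primitive_at[OF S(2,1) \<open>\<phi> holomorphic_on S\<close>] by blast
  define w where "w x = u x - \<Phi> x - cnj (\<Phi> x)" for x
  have "has_wirtinger_derivs w 0 0 x" if x: "x \<in> S" for x
  proof -
    have "has_wirtinger_derivs w (\<phi> x - \<phi> x - cnj 0) (dzb u x - 0 - cnj (\<phi> x)) x"
      unfolding w_def
      by (intro has_wirtinger_derivs_diff u x has_wirtinger_derivs_holomorphic \<Phi>
          has_wirtinger_derivs_cnj[OF has_wirtinger_derivs_holomorphic[OF \<Phi>[OF x]]])
    then show ?thesis
      using has_wirtinger_derivs_real[OF u[OF x] S(1) x real] by simp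
  qed
  then obtain w0 where w0: "\<And>x. x \<in> S \<Longrightarrow> w x = w0"
    using has_wirtinger_derivs_zero_constant_on[OF convex_connected[OF S(2)] S(1)]
    unfolding constant_on_def by blast
  have "u x = of_real (Re w0 + 2 * Re (\<Phi> x))" if x: "x \<in> S" for x
  proof -
    have "u x = w0 + (\<Phi> x + cnj (\<Phi> x))"
      using w0[OF x] unfolding w_def by (simp add: diff_eq_eq ac_simps)
    then have "u x = w0 + of_real (2 * Re (\<Phi> x))"
      by (simp only: complex_add_cnj)
    moreover have "u x = of_real (Re (u x))"
      using real[OF x] complex_eq_iff by auto
    ultimately show ?thesis
      by (metis Re_complex_of_real plus_complex.sel(1))
  qed
  moreover have "\<Phi> holomorphic_on S"
    using \<Phi> S(1) holomorphic_on_open by blast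
  ultimately show ?thesis
    by blast
qed

lemma potential_of_dzb_dz_eq_norm_square_deriv:
  fixes \<kappa> :: real and u f :: "complex \<Rightarrow> complex"
  assumes S: "open S" "convex S"
    and u: "\<And>x. x \<in> S \<Longrightarrow> has_wirtinger_derivs u (dz u x) (dzb u x) x"
    and dz_u: "\<And>x. x \<in> S \<Longrightarrow> has_wirtinger_derivs (dz u) (dz (dz u) x) (dzb (dz u) x) x"
    and real: "\<And>x. x \<in> S \<Longrightarrow> cnj (u x) = u x"
    and f: "f holomorphic_on S"
    and dzb_dz: "\<And>x. x \<in> S \<Longrightarrow> dzb (dz u) x = \<kappa> * deriv f x * cnj (deriv f x)"
  shows "\<exists>\<Phi> c. \<Phi> holomorphic_on S \<and>
    (\<forall>x\<in>S. u x = of_real (c + 2 * Re (\<Phi> x) + \<kappa> * (cmod (f x))\<^sup>2))"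
proof -
  have f': "deriv f holomorphic_on S"
    using f S(1) by (rule holomorphic_deriv)
  define v where "v x = u x - \<kappa> * (f x * cnj (f x))" for x :: complex
  define \<phi> where "\<phi> x = dz u x - \<kappa> * (deriv f x * cnj (f x))" for x :: complex
  \<comment> \<open>\<open>\<phi> = dz v\<close>, and \<open>dzb \<phi> = dzb (dz u) - \<kappa> |f'|\<^sup>2 = 0\<close>.\<close>
  have "\<phi> holomorphic_on S"
  proof (rule holomorphic_on_if_dzb_zero[OF S(1)])
    fix x
    assume x: "x \<in> S"
    have "has_wirtinger_derivs \<phi> (dz (dz u) x - \<kappa> * (deriv (deriv f) x * cnj (f x)))
        (dzb (dz u) x - \<kappa> * (deriv f x * cnj (deriv f x))) x"
      unfolding \<phi>_def
      by (intro has_wirtinger_derivs_diff dz_u x has_wirtinger_derivs_cmult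
          has_wirtinger_derivs_holomorphic_mult_cnj[OF f' f S(1) x])
    then show "has_wirtinger_derivs \<phi> (dz (dz u) x - \<kappa> * (deriv (deriv f) x * cnj (f x))) 0 x"
      by (rule has_wirtinger_derivs_eq_rhs) (simp_all add: dzb_dz[OF x])
  qed
  moreover have "has_wirtinger_derivs v (\<phi> x) (dzb u x - \<kappa> * (f x * cnj (deriv f x))) x" if x: "x \<in> S" for x
    unfolding v_def \<phi>_def
    by (intro has_wirtinger_derivs_diff u x has_wirtinger_derivs_cmult
        has_wirtinger_derivs_holomorphic_mult_cnj[OF f f S(1) x])
  then have "has_wirtinger_derivs v (\<phi> x) (dzb v x) x" if "x \<in> S" for x
    using has_wirtinger_derivsD(2) that by metis
  moreover have "cnj (v x) = v x" if "x \<in> S" for x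
    using real[OF that] by (simp add: v_def)
  ultimately obtain \<Phi> c where "\<Phi> holomorphic_on S" "\<And>x. x \<in> S \<Longrightarrow> v x = of_real (c + 2 * Re (\<Phi> x))"
    using real_eq_Re_holomorphic_if_dz_holomorphic[OF S] by blast
  moreover have "u x = v x + of_real (\<kappa> * (cmod (f x))\<^sup>2)" for x
    unfolding v_def of_real_mult complex_norm_square by simp
  ultimately show ?thesis
    by (intro exI[of _ \<Phi>] exI[of _ c]) simp
qed

lemma rigidly_equiv_sphere_at0I:
  fixes F :: "complex \<Rightarrow> real" and \<kappa> c :: real
  assumes U: "open U" "0 \<in> U" and f: "f holomorphic_on U" "deriv f 0 \<noteq> 0"
    and \<Phi>: "\<Phi> holomorphic_on U" and "\<kappa> \<noteq> 0"
    and F: "\<And>x. x \<in> U \<Longrightarrow> F x = c + 2 * Re (\<Phi> x) + \<kappa> * (cmod (f x))\<^sup>2"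
  shows "rigidly_equiv_sphere_at0 F"
proof -
  obtain r where r: "r > 0" "ball 0 r \<subseteq> U" "inj_on f (ball 0 r)"
    using has_complex_derivative_locally_injective[OF f(1) U(2,1) f(2)] by blast
  define g where "g x = - complex_of_real (inverse \<kappa>) * (2 * \<Phi> x + complex_of_real c)" for x
  have "rigid_map f (inverse \<kappa>) g (z, w) \<in> heisenberg" if "Re w = F z" "z \<in> U" for z w
  proof -
    have "Re (complex_of_real (inverse \<kappa>) * w + g z) = inverse \<kappa> * (F z - 2 * Re (\<Phi> z) - c)"
      by (simp add: g_def that(1) algebra_simps del: of_real_inverse)
    also have "\<dots> = (cmod (f z))\<^sup>2"
      using F[OF that(2)] \<open>\<kappa> \<noteq> 0\<close> by (simp add: field_simps)
    finally show ?thesis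
      by (simp add: rigid_map_def heisenberg_def)
  qed
  moreover have "g holomorphic_on ball 0 r"
    unfolding g_def using holomorphic_on_subset[OF \<Phi> r(2)] by (intro holomorphic_intros)
  ultimately show ?thesis
    unfolding rigidly_equiv_sphere_at0_def using r \<open>\<kappa> \<noteq> 0\<close> holomorphic_on_subset[OF f(1) r(2)]
    by (intro exI[of _ "ball 0 r"] exI[of _ f] exI[of _ g] exI[of _ "inverse \<kappa>"])
       (auto simp: rigid_hyp_def)
qed

lemma zzbar_analytic_dz_dzb_eq_norm_square_deriv:
  assumes u: "zzbar_analytic r u" and real: "\<And>x. x \<in> ball 0 r \<Longrightarrow> cnj (u x) = u x"
    and nonzero: "\<And>z. z \<in> ball 0 r \<Longrightarrow> dz (dzb u) z \<noteq> 0"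
    and curvature: "\<And>z. z \<in> ball 0 r \<Longrightarrow>
      dz (dz (dzb (dzb u))) z * dz (dzb u) z - dz (dz (dzb u)) z * dz (dzb (dzb u)) z = 0"
  shows "\<exists>(\<kappa>::real) f. f holomorphic_on ball 0 r \<and>
    (\<forall>x\<in>ball 0 r. deriv f x \<noteq> 0 \<and> dz (dzb u) x = \<kappa> * deriv f x * cnj (deriv f x))"
proof -
  define h where "h = dz (dzb u)"
  have h: "zzbar_analytic r h"
    unfolding h_def by (rule zzbar_analytic_dz[OF zzbar_analytic_dzb[OF u]])
  have "\<exists>(\<kappa>::real) f. f holomorphic_on ball 0 r \<and>
      (\<forall>x\<in>ball 0 r. deriv f x \<noteq> 0 \<and> h x = \<kappa> * deriv f x * cnj (deriv f x))"
  proof (rule log_harmonic_imp_norm_square_deriv)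
    fix x :: complex
    assume x: "x \<in> ball 0 r"
    show "has_wirtinger_derivs h (dz h x) (dzb h x) x"
      by (rule zzbar_analytic_has_wirtinger_derivs[OF h x])
    show "has_wirtinger_derivs (dz h) (dz (dz h) x) (dzb (dz h) x) x"
      by (rule zzbar_analytic_has_wirtinger_derivs[OF zzbar_analytic_dz[OF h] x])
    show "cnj (h x) = h x"
      unfolding h_def using u real x by (rule zzbar_analytic_real_imp_dz_dzb_real)
    show "h x \<noteq> 0"
      unfolding h_def using x by (rule nonzero)
    show "dzb (dz h) x * h x = dz h x * dzb h x"
      using curvature[OF x] zzbar_analytic_curvature_eq[OF u x] by (simp add: h_def)
  qed simp_all
  then show ?thesis
    by (simp add: h_def)
qed

lemma rigidly_equiv_sphere_at0_if_curvature_zero: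
  fixes F :: "complex \<Rightarrow> real"
  defines "Fc \<equiv> \<lambda>z. complex_of_real (F z)"
  assumes "r > 0" and Fc: "zzbar_analytic r Fc"
    and nonzero: "\<And>z. z \<in> ball 0 r \<Longrightarrow> dz (dzb Fc) z \<noteq> 0"
    and curvature: "\<And>z. z \<in> ball 0 r \<Longrightarrow>
      dz (dz (dzb (dzb Fc))) z * dz (dzb Fc) z - dz (dz (dzb Fc)) z * dz (dzb (dzb Fc)) z = 0"
  shows "rigidly_equiv_sphere_at0 F"
proof -
  have Fc_real: "cnj (Fc x) = Fc x" for x
    by (simp add: Fc_def)
  obtain \<kappa> :: real and f :: "complex \<Rightarrow> complex" where f: "f holomorphic_on ball 0 r"
    and h_eq: "\<And>x. x \<in> ball 0 r \<Longrightarrow> deriv f x \<noteq> 0 \<and> dz (dzb Fc) x = \<kappa> * deriv f x * cnj (deriv f x)"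
    using zzbar_analytic_dz_dzb_eq_norm_square_deriv[OF Fc Fc_real nonzero curvature] by blast
  have "\<exists>\<Phi> c. \<Phi> holomorphic_on ball 0 r \<and>
      (\<forall>x\<in>ball 0 r. Fc x = of_real (c + 2 * Re (\<Phi> x) + \<kappa> * (cmod (f x))\<^sup>2))"
  proof (rule potential_of_dzb_dz_eq_norm_square_deriv[OF _ _ _ _ Fc_real f])
    fix x :: complex
    assume x: "x \<in> ball 0 r"
    show "has_wirtinger_derivs Fc (dz Fc x) (dzb Fc x) x"
      by (rule zzbar_analytic_has_wirtinger_derivs[OF Fc x])
    show "has_wirtinger_derivs (dz Fc) (dz (dz Fc) x) (dzb (dz Fc) x) x"
      by (rule zzbar_analytic_has_wirtinger_derivs[OF zzbar_analytic_dz[OF Fc] x])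
    show "dzb (dz Fc) x = \<kappa> * deriv f x * cnj (deriv f x)"
      using h_eq[OF x] zzbar_analytic_dz_dzb_commute[OF Fc x] by simp
  qed simp_all
  then obtain \<Phi> c where "\<Phi> holomorphic_on ball 0 r"
    and "\<And>x. x \<in> ball 0 r \<Longrightarrow> F x = c + 2 * Re (\<Phi> x) + \<kappa> * (cmod (f x))\<^sup>2"
    unfolding Fc_def of_real_eq_iff by blast
  moreover have "\<kappa> \<noteq> 0"
    using h_eq[of 0] nonzero[of 0] \<open>r > 0\<close> by auto
  ultimately show ?thesis
    using \<open>r > 0\<close> f h_eq[of 0] by (intro rigidly_equiv_sphere_at0I[of "ball 0 r"]) auto
qed

theorem proposition2p8:
  fixes F :: "complex \<Rightarrow> real"
  defines "Fc \<equiv> (\<lambda>z. complex_of_real (F z))"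
  assumes analytic: "real_analytic_near0 F"
    and origin: "F 0 = 0"
    and nondeg: "\<exists>r>0. \<forall>z\<in>ball 0 r. dz (dzb Fc) z \<noteq> 0"
  shows "rigidly_equiv_sphere_at0 F \<longleftrightarrow>
    (\<exists>r>0. \<forall>z\<in>ball 0 r.
       dz (dz (dzb (dzb Fc))) z * dz (dzb Fc) z - dz (dz (dzb Fc)) z * dz (dzb (dzb Fc)) z = 0)"
proof
  assume "rigidly_equiv_sphere_at0 F"
  then show "\<exists>r>0. \<forall>z\<in>ball 0 r.
      dz (dz (dzb (dzb Fc))) z * dz (dzb Fc) z - dz (dz (dzb Fc)) z * dz (dzb (dzb Fc)) z = 0"
    unfolding Fc_def by (rule curvature_zero_if_rigidly_equiv_sphere_at0)
next
  assume "\<exists>r>0. \<forall>z\<in>ball 0 r.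
      dz (dz (dzb (dzb Fc))) z * dz (dzb Fc) z - dz (dz (dzb Fc)) z * dz (dzb (dzb Fc)) z = 0"
  then obtain r1 where "r1 > 0" and curvature: "\<forall>z\<in>ball 0 r1.
      dz (dz (dzb (dzb Fc))) z * dz (dzb Fc) z - dz (dz (dzb Fc)) z * dz (dzb (dzb Fc)) z = 0"
    by blast
  obtain r2 where "r2 > 0" and nonzero: "\<forall>z\<in>ball 0 r2. dz (dzb Fc) z \<noteq> 0"
    using nondeg by blast
  obtain r0 where "r0 > 0" "zzbar_analytic r0 Fc"
    using real_analytic_near0_imp_zzbar_analytic[OF analytic] unfolding Fc_def by blast
  have "zzbar_analytic (min r0 (min r1 r2)) Fc"
    using \<open>zzbar_analytic r0 Fc\<close> by (rule zzbar_analytic_mono) simp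
  then show "rigidly_equiv_sphere_at0 F"
    unfolding Fc_def using \<open>r0 > 0\<close> \<open>r1 > 0\<close> \<open>r2 > 0\<close> nonzero curvature
    by (intro rigidly_equiv_sphere_at0_if_curvature_zero) (auto simp: Fc_def)
qed

end
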